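(* Fix $\sigma>0$ and let $f_M$ be the single-epoch DP-SGD random-shuffling trade-off function with $M$ rounds and noise multiplier $\sigma$; let $\mu_M=\sqrt{(e^{1/\sigma^2}-1)/(M-1)}$. Let $(E_M)$ be positive integers with $E_M=O(M)$. Then there is a constant $C$ such that for all sufficiently large $M$, $$\mathrm{sep}\big(f_M^{\otimes E_M}\big)\le C\,\mu_M\sqrt{E_M}.$$
   Context: Fix a noise multiplier $\sigma>0$ and an integer $M\ge2$. Write $\mathrm{n}(x)=e^{-x^2/2}/\sqrt{2\pi}$ and $\Phi(x)=\int_{-\infty}^x\mathrm{n}(t)\,dt$. Let $P_0$ be the law on $\mathbb R^M$ of $(X_1,\dots,X_M)$ with i.i.d. $N(0,1)$ coordinates, and $P_1$ the law obtained by drawing $J$ uniformly from $\{1,\dots,M\}$ and then, independently, $X_J\sim N(1/\sigma,1)$ and $X_i\sim N(0,1)$ for $i\neq J$, all independent. For a (randomized) rejection rule $\phi:\mathbb R^M\to[0,1]$ let $\alpha(\phi)=\mathbb E_{P_0}[\phi]$, $\beta(\phi)=1-\mathbb E_{P_1}[\phi]$. For distributions $P,Q$ the trade-off function is $T(P,Q)(a)=\inf\{\beta(\phi):\alpha(\phi)\le a\}$, $a\in[0,1]$. The single-epoch DP-SGD random-shuffling trade-off function with $M$ rounds and noise multiplier $\sigma$ is $f=T(P_0,P_1)$. For trade-off functions $f=T(P,Q)$, $g=T(P',Q')$, the composition is $f\otimes g=T(P\times P',Q\times Q')$, and $f^{\otimes E}$ denotes the $E$-fold composition. The separation of a trade-off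 function $f$ from the diagonal is $\mathrm{sep}(f)=\max_{a\in[0,1]}\min_{\gamma\in[0,1]}\|(a,f(a))-(\gamma,1-\gamma)\|_2$. *)

theory Defs
  imports "HOL-Probability.Probability" "HOL-Library.Landau_Symbols"
begin

definition gauss1 :: "real \<Rightarrow> real measure" where
  "gauss1 m = density lborel (normal_density m 1)"

definition dpsgd_P0 :: "nat \<Rightarrow> (nat \<Rightarrow> real) measure" where
  "dpsgd_P0 M = PiM {..<M} (\<lambda>_. gauss1 0)"

definition dpsgd_P1 :: "real \<Rightarrow> nat \<Rightarrow> (nat \<Rightarrow> real) measure" where
  "dpsgd_P1 \<sigma> M = measure_pmf (pmf_of_set {..<M}) \<bind>
      (\<lambda>J. PiM {..<M} (\<lambda>i. if i = J then gauss1 (1 / \<sigma>) else gauss1 0))"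

definition tradeoff :: "'a measure \<Rightarrow> 'a measure \<Rightarrow> real \<Rightarrow> real" where
  "tradeoff P Q a = Inf {1 - (\<integral>x. \<phi> x \<partial>Q) | \<phi>.
      \<phi> \<in> borel_measurable P \<and> (\<forall>x \<in> space P. 0 \<le> \<phi> x \<and> \<phi> x \<le> 1)
      \<and> (\<integral>x. \<phi> x \<partial>P) \<le> a}"

text \<open>E-fold composition of the single-epoch shuffling trade-off function: T(P0^E, P1^E).\<close>
definition dpsgd_tradeoff_comp :: "real \<Rightarrow> nat \<Rightarrow> nat \<Rightarrow> real \<Rightarrow> real" where
  "dpsgd_tradeoff_comp \<sigma> M E =
     tradeoff (PiM {..<E} (\<lambda>_. dpsgd_P0 M)) (PiM {..<E} (\<lambda>_. dpsgd_P1 \<sigma> M))"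

definition sep :: "(real \<Rightarrow> real) \<Rightarrow> real" where
  "sep f = (SUP a\<in>{0..1}. INF \<gamma>\<in>{0..1}. dist (a, f a) (\<gamma>, 1 - \<gamma>))"

end

theory Submission
  imports Defs
begin

(* The law P1 has density L(x) = (1/M) sum_j exp(x_j/sigma - 1/(2 sigma^2)) with respect to P0,
   and E_P0[L^2] = 1 + (e^(1/sigma^2) - 1)/M.  For a [0,1]-valued test phi the power minus the
   size is E_P0[phi (L - 1)] <= sqrt(chi^2), where chi^2 = E_P0[L^2] - 1 (Cauchy-Schwarz, obtained
   here from the pointwise AM-GM bound with an optimised weight).  So the trade-off function lies
   between 1 - a - sqrt(chi^2) and 1 - a, and sep is at most sqrt(chi^2).  Under E-fold
   composition the densities multiply and so do the second moments, whence
   chi^2 = (1 + c/M)^E - 1 <= e^(cB) mu_M^2 E with c = e^(1/sigma^2) - 1 whenever E <= B M. *)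

lemma tradeoff_bounds:
  assumes P: "prob_space P" and Q: "prob_space Q" and "0 \<le> a" "a \<le> 1"
    and power_le: "\<And>\<phi>. \<phi> \<in> borel_measurable P \<Longrightarrow> (\<forall>x\<in>space P. 0 \<le> \<phi> x \<and> \<phi> x \<le> 1) \<Longrightarrow>
              (\<integral>x. \<phi> x \<partial>Q) \<le> (\<integral>x. \<phi> x \<partial>P) + t"
  shows "1 - a - t \<le> tradeoff P Q a" "tradeoff P Q a \<le> 1 - a"
proof -
  define S where "S = {1 - (\<integral>x. \<phi> x \<partial>Q) | \<phi>.
      \<phi> \<in> borel_measurable P \<and> (\<forall>x \<in> space P. 0 \<le> \<phi> x \<and> \<phi> x \<le> 1) \<and> (\<integral>x. \<phi> x \<partial>P) \<le> a}"
  have "1 - a \<in> S"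
    unfolding S_def using assms prob_space.prob_space[OF P] prob_space.prob_space[OF Q]
    by (intro CollectI exI[of _ "\<lambda>_. a"]) auto
  moreover have "1 - a - t \<le> s" if "s \<in> S" for s
    using that power_le unfolding S_def by force
  ultimately show "1 - a - t \<le> tradeoff P Q a" "tradeoff P Q a \<le> 1 - a"
    unfolding tradeoff_def S_def[symmetric] by (auto intro!: cInf_greatest cInf_lower bdd_belowI)
qed

lemma sep_le:
  assumes "\<And>a. 0 \<le> a \<Longrightarrow> a \<le> 1 \<Longrightarrow> 1 - a - t \<le> f a \<and> f a \<le> 1 - a"
  shows "sep f \<le> t"
  unfolding sep_def
proof (rule cSUP_least)
  fix a :: real assume a: "a \<in> {0..1}"
  have "(INF \<gamma>\<in>{0..1}. dist (a, f a) (\<gamma>, 1 - \<gamma>)) \<le> dist (a, f a) (a, 1 - a)"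
    using a by (intro cINF_lower) (auto intro!: bdd_belowI[of _ 0])
  also have "\<dots> \<le> t"
    using assms[of a] a by (auto simp: dist_Pair_Pair dist_real_def)
  finally show "(INF \<gamma>\<in>{0..1}. dist (a, f a) (\<gamma>, 1 - \<gamma>)) \<le> t" .
qed simp

lemma prob_space_density_integral_eq_1:
  assumes [measurable]: "L \<in> borel_measurable P" and "\<And>x. 0 \<le> L x"
    and "integrable P L" "(\<integral>x. L x \<partial>P) = 1"
  shows "prob_space (density P (\<lambda>x. ennreal (L x)))"
proof (rule prob_spaceI)
  have "emeasure (density P (\<lambda>x. ennreal (L x))) (space P) = (\<integral>\<^sup>+x. ennreal (L x) \<partial>P)"
    by (subst emeasure_density) (auto intro!: nn_integral_cong)
  also have "\<dots> = 1"
    using assms by (subst nn_integral_eq_integral) auto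
  finally show "emeasure (density P (\<lambda>x. ennreal (L x))) (space (density P (\<lambda>x. ennreal (L x)))) = 1"
    by simp
qed

lemma mult_le_amgm:
  fixes p d t :: real
  assumes "0 \<le> p" "p \<le> 1" "0 < t"
  shows "p * d \<le> (t + d\<^sup>2 / t) / 2"
proof -
  have "2 * t * \<bar>d\<bar> \<le> t\<^sup>2 + d\<^sup>2"
    using sum_squares_ge_zero[of "t - \<bar>d\<bar>" 0] by (simp add: power2_eq_square algebra_simps)
  then have "\<bar>d\<bar> \<le> (t + d\<^sup>2 / t) / 2"
    using assms(3) by (simp add: field_simps power2_eq_square)
  moreover have "p * d \<le> \<bar>d\<bar>"
    using assms by (cases "0 \<le> d") (auto intro: mult_left_le_one_le order_trans[OF mult_nonneg_nonpos])
  ultimately show ?thesis by linarith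
qed

lemma integral_diff_one_sq:
  fixes L :: "'a \<Rightarrow> real"
  assumes "prob_space P" "integrable P L" "(\<integral>x. L x \<partial>P) = 1" "integrable P (\<lambda>x. (L x)\<^sup>2)"
  shows "(\<integral>x. (L x - 1)\<^sup>2 \<partial>P) = (\<integral>x. (L x)\<^sup>2 \<partial>P) - 1"
proof -
  interpret prob_space P by fact
  have "(\<integral>x. (L x - 1)\<^sup>2 \<partial>P) = (\<integral>x. (L x)\<^sup>2 - 2 * L x + 1 \<partial>P)"
    by (simp add: power2_diff algebra_simps)
  then show ?thesis
    using assms by (simp add: prob_space)
qed

lemma integral_density_le_amgm:
  fixes L \<phi> :: "'a \<Rightarrow> real"
  assumes "prob_space P"
    and [measurable]: "L \<in> borel_measurable P" and L_nonneg: "\<And>x. 0 \<le> L x"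
    and L_int: "integrable P L" "(\<integral>x. L x \<partial>P) = 1" and L_sq_int: "integrable P (\<lambda>x. (L x)\<^sup>2)"
    and [measurable]: "\<phi> \<in> borel_measurable P"
    and \<phi>_range: "\<And>x. x \<in> space P \<Longrightarrow> 0 \<le> \<phi> x \<and> \<phi> x \<le> 1"
    and "0 < t"
  shows "(\<integral>x. \<phi> x \<partial>density P (\<lambda>x. ennreal (L x)))
      \<le> (\<integral>x. \<phi> x \<partial>P) + (t + ((\<integral>x. (L x)\<^sup>2 \<partial>P) - 1) / t) / 2"
proof -
  interpret prob_space P by fact
  have \<phi>_int: "integrable P \<phi>"
    using \<phi>_range by (intro integrable_const_bound[where B=1]) auto
  have "(\<integral>x. \<phi> x \<partial>density P (\<lambda>x. ennreal (L x))) = (\<integral>x. L x * \<phi> x \<partial>P)"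
    by (subst integral_density) (auto simp: L_nonneg)
  also have "\<dots> \<le> (\<integral>x. \<phi> x + (t + (L x - 1)\<^sup>2 / t) / 2 \<partial>P)"
  proof (rule integral_mono)
    show "integrable P (\<lambda>x. L x * \<phi> x)"
      using \<phi>_range L_nonneg
      by (intro Bochner_Integration.integrable_bound[OF L_int(1)])
         (auto intro!: mult_right_le_one_le simp: abs_mult)
    show "integrable P (\<lambda>x. \<phi> x + (t + (L x - 1)\<^sup>2 / t) / 2)"
      using \<phi>_int L_int L_sq_int by (simp add: power2_diff)
    show "L x * \<phi> x \<le> \<phi> x + (t + (L x - 1)\<^sup>2 / t) / 2" if "x \<in> space P" for x
    proof -
      have "\<phi> x * (L x - 1) \<le> (t + (L x - 1)\<^sup>2 / t) / 2"
        using \<phi>_range[OF that] \<open>0 < t\<close> by (intro mult_le_amgm) auto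
      moreover have "L x * \<phi> x = \<phi> x + \<phi> x * (L x - 1)"
        by (simp add: algebra_simps)
      ultimately show ?thesis
        by linarith
    qed
  qed
  also have "\<dots> = (\<integral>x. \<phi> x \<partial>P) + (t + ((\<integral>x. (L x)\<^sup>2 \<partial>P) - 1) / t) / 2"
    using \<phi>_int L_int L_sq_int integral_diff_one_sq[OF \<open>prob_space P\<close> L_int L_sq_int, symmetric]
    by (simp add: power2_diff prob_space)
  finally show ?thesis .
qed

lemma integral_density_le_chi_square:
  fixes L \<phi> :: "'a \<Rightarrow> real"
  assumes "prob_space P"
    and [measurable]: "L \<in> borel_measurable P" and "\<And>x. 0 \<le> L x"
    and L_int: "integrable P L" "(\<integral>x. L x \<partial>P) = 1" and L_sq_int: "integrable P (\<lambda>x. (L x)\<^sup>2)"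
    and [measurable]: "\<phi> \<in> borel_measurable P"
    and "\<And>x. x \<in> space P \<Longrightarrow> 0 \<le> \<phi> x \<and> \<phi> x \<le> 1"
  shows "(\<integral>x. \<phi> x \<partial>density P (\<lambda>x. ennreal (L x))) \<le> (\<integral>x. \<phi> x \<partial>P) + sqrt ((\<integral>x. (L x)\<^sup>2 \<partial>P) - 1)"
proof -
  define chi_sq where "chi_sq = (\<integral>x. (L x)\<^sup>2 \<partial>P) - 1"
  have bound: "(\<integral>x. \<phi> x \<partial>density P (\<lambda>x. ennreal (L x))) \<le> (\<integral>x. \<phi> x \<partial>P) + (t + chi_sq / t) / 2"
    if "0 < t" for t
    unfolding chi_sq_def using assms that by (intro integral_density_le_amgm) auto
  have "0 \<le> chi_sq"
    unfolding chi_sq_def integral_diff_one_sq[OF \<open>prob_space P\<close> L_int L_sq_int, symmetric] by simp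
  show ?thesis
    unfolding chi_sq_def[symmetric]
  proof (cases "chi_sq = 0")
    case True
    show "(\<integral>x. \<phi> x \<partial>density P (\<lambda>x. ennreal (L x))) \<le> (\<integral>x. \<phi> x \<partial>P) + sqrt chi_sq"
    proof (rule field_le_epsilon)
      fix e :: real assume "0 < e"
      then show "(\<integral>x. \<phi> x \<partial>density P (\<lambda>x. ennreal (L x))) \<le> (\<integral>x. \<phi> x \<partial>P) + sqrt chi_sq + e"
        using bound[of "2 * e"] True by simp
    qed
  next
    case False
    with \<open>0 \<le> chi_sq\<close> have "(sqrt chi_sq + chi_sq / sqrt chi_sq) / 2 = sqrt chi_sq"
      by (simp add: real_div_sqrt)
    then show "(\<integral>x. \<phi> x \<partial>density P (\<lambda>x. ennreal (L x))) \<le> (\<integral>x. \<phi> x \<partial>P) + sqrt chi_sq"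
      using bound[of "sqrt chi_sq"] False \<open>0 \<le> chi_sq\<close> by simp
  qed
qed

lemma sep_tradeoff_density_le:
  fixes L :: "'a \<Rightarrow> real"
  assumes "prob_space P"
    and [measurable]: "L \<in> borel_measurable P" and "\<And>x. 0 \<le> L x"
    and "integrable P L" "(\<integral>x. L x \<partial>P) = 1" "integrable P (\<lambda>x. (L x)\<^sup>2)"
  shows "sep (tradeoff P (density P (\<lambda>x. ennreal (L x)))) \<le> sqrt ((\<integral>x. (L x)\<^sup>2 \<partial>P) - 1)"
proof (rule sep_le, rule conjI)
  fix a :: real assume "0 \<le> a" "a \<le> 1"
  note bounds = tradeoff_bounds[OF \<open>prob_space P\<close> prob_space_density_integral_eq_1 this
      integral_density_le_chi_square]
  show "1 - a - sqrt ((\<integral>x. (L x)\<^sup>2 \<partial>P) - 1) \<le> tradeoff P (density P (\<lambda>x. ennreal (L x))) a"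
    using assms by (intro bounds(1)) auto
  show "tradeoff P (density P (\<lambda>x. ennreal (L x))) a \<le> 1 - a"
    using assms by (intro bounds(2)) auto
qed

lemma PiM_density:
  fixes f :: "'i \<Rightarrow> 'a \<Rightarrow> ennreal"
  assumes fin: "finite I" and "sigma_finite_measure M"
    and f_meas [measurable]: "\<And>i. f i \<in> borel_measurable M"
    and "\<And>i. prob_space (density M (f i))"
  shows "PiM I (\<lambda>i. density M (f i)) = density (PiM I (\<lambda>_. M)) (\<lambda>x. \<Prod>i\<in>I. f i (x i))"
proof -
  interpret N: product_sigma_finite "\<lambda>i. density M (f i)"
    unfolding product_sigma_finite_def using assms prob_space_imp_sigma_finite by auto
  interpret product_sigma_finite "\<lambda>_. M"
    unfolding product_sigma_finite_def using assms by auto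
  show ?thesis
  proof (rule N.PiM_eqI[symmetric, OF fin])
    show "sets (density (PiM I (\<lambda>_. M)) (\<lambda>x. \<Prod>i\<in>I. f i (x i))) = sets (PiM I (\<lambda>i. density M (f i)))"
      unfolding sets_density by (rule sets_PiM_cong) simp_all
    fix A assume "\<And>i. i \<in> I \<Longrightarrow> A i \<in> sets (density M (f i))"
    then have A [measurable]: "\<And>i. i \<in> I \<Longrightarrow> A i \<in> sets M" by simp
    have "PiE I A \<in> sets (PiM I (\<lambda>_. M))"
      by (intro sets_PiM_I_finite fin) auto
    then have "emeasure (density (PiM I (\<lambda>_. M)) (\<lambda>x. \<Prod>i\<in>I. f i (x i))) (PiE I A)
        = (\<integral>\<^sup>+x. (\<Prod>i\<in>I. f i (x i)) * indicator (PiE I A) x \<partial>PiM I (\<lambda>_. M))"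
      by (subst emeasure_density) auto
    also have "\<dots> = (\<integral>\<^sup>+x. (\<Prod>i\<in>I. f i (x i) * indicator (A i) (x i)) \<partial>PiM I (\<lambda>_. M))"
      by (intro nn_integral_cong)
        (auto simp: space_PiM indicator_def prod.distrib[symmetric] fin PiE_def Pi_iff)
    also have "\<dots> = (\<Prod>i\<in>I. \<integral>\<^sup>+t. f i t * indicator (A i) t \<partial>M)"
      by (intro product_nn_integral_prod fin) auto
    also have "\<dots> = (\<Prod>i\<in>I. emeasure (density M (f i)) (A i))"
      by (intro prod.cong refl) (simp add: emeasure_density)
    finally show "emeasure (density (PiM I (\<lambda>_. M)) (\<lambda>x. \<Prod>i\<in>I. f i (x i))) (PiE I A)
        = (\<Prod>i\<in>I. emeasure (density M (f i)) (A i))" .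
  qed
qed

lemma integral_PiM_prod_power:
  fixes f :: "'a \<Rightarrow> real"
  assumes "finite I" "sigma_finite_measure M" "integrable M f"
  shows "integrable (PiM I (\<lambda>_. M)) (\<lambda>x. \<Prod>i\<in>I. f (x i))"
    "(\<integral>x. (\<Prod>i\<in>I. f (x i)) \<partial>PiM I (\<lambda>_. M)) = (\<integral>x. f x \<partial>M) ^ card I"
proof -
  interpret product_sigma_finite "\<lambda>_. M"
    unfolding product_sigma_finite_def using assms by auto
  show "integrable (PiM I (\<lambda>_. M)) (\<lambda>x. \<Prod>i\<in>I. f (x i))"
    using assms by (intro product_integrable_prod) auto
  show "(\<integral>x. (\<Prod>i\<in>I. f (x i)) \<partial>PiM I (\<lambda>_. M)) = (\<integral>x. f x \<partial>M) ^ card I"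
    using assms by (subst product_integral_prod) auto
qed

lemma integral_PiM_coord:
  fixes f :: "'a \<Rightarrow> real"
  assumes "finite I" "j \<in> I" "prob_space M" "integrable M f"
  shows "integrable (PiM I (\<lambda>_. M)) (\<lambda>x. f (x j))"
    "(\<integral>x. f (x j) \<partial>PiM I (\<lambda>_. M)) = (\<integral>x. f x \<partial>M)"
proof -
  interpret prob_space M by fact
  interpret product_sigma_finite "\<lambda>_. M"
    unfolding product_sigma_finite_def by (simp add: sigma_finite_measure_axioms)
  define h where "h = (\<lambda>i t. if i = j then f t else 1)"
  have h_prod: "(\<Prod>i\<in>I. h i (x i)) = f (x j)" for x
    using assms by (simp add: h_def)
  have h_int: "integrable M (h i)" for i
    using assms by (cases "i = j") (simp_all add: h_def)
  have "integrable (PiM I (\<lambda>_. M)) (\<lambda>x. \<Prod>i\<in>I. h i (x i))"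
    using h_int \<open>finite I\<close> by (intro product_integrable_prod)
  then show "integrable (PiM I (\<lambda>_. M)) (\<lambda>x. f (x j))"
    by (simp add: h_prod)
  have "(\<integral>x. f (x j) \<partial>PiM I (\<lambda>_. M)) = (\<Prod>i\<in>I. integral\<^sup>L M (h i))"
    using h_int \<open>finite I\<close> by (simp add: product_integral_prod flip: h_prod)
  also have "\<dots> = (\<Prod>i\<in>I. if i = j then integral\<^sup>L M f else 1)"
    by (intro prod.cong refl) (simp add: h_def prob_space)
  also have "\<dots> = (\<integral>x. f x \<partial>M)"
    using assms by simp
  finally show "(\<integral>x. f (x j) \<partial>PiM I (\<lambda>_. M)) = (\<integral>x. f x \<partial>M)" .
qed

lemma integral_PiM_two_coords:
  fixes f g :: "'a \<Rightarrow> real"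
  assumes "finite I" "j \<in> I" "k \<in> I" "j \<noteq> k" "prob_space M" "integrable M f" "integrable M g"
  shows "integrable (PiM I (\<lambda>_. M)) (\<lambda>x. f (x j) * g (x k))"
    "(\<integral>x. f (x j) * g (x k) \<partial>PiM I (\<lambda>_. M)) = (\<integral>x. f x \<partial>M) * (\<integral>x. g x \<partial>M)"
proof -
  interpret prob_space M by fact
  interpret product_sigma_finite "\<lambda>_. M"
    unfolding product_sigma_finite_def by (simp add: sigma_finite_measure_axioms)
  define h where "h = (\<lambda>i t. (if i = j then f t else 1) * (if i = k then g t else 1))"
  have h_prod: "(\<Prod>i\<in>I. h i (x i)) = f (x j) * g (x k)" for x
    using assms by (simp add: h_def prod.distrib)
  have h_int: "integrable M (h i)" for i
    using assms by (cases "i = j"; cases "i = k") (simp_all add: h_def)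
  have h_integral: "integral\<^sup>L M (h i) =
      (if i = j then integral\<^sup>L M f else 1) * (if i = k then integral\<^sup>L M g else 1)" for i
    using assms by (simp add: h_def prob_space)
  have "integrable (PiM I (\<lambda>_. M)) (\<lambda>x. \<Prod>i\<in>I. h i (x i))"
    using h_int \<open>finite I\<close> by (intro product_integrable_prod)
  then show "integrable (PiM I (\<lambda>_. M)) (\<lambda>x. f (x j) * g (x k))"
    by (simp add: h_prod)
  have "(\<integral>x. f (x j) * g (x k) \<partial>PiM I (\<lambda>_. M)) = (\<Prod>i\<in>I. integral\<^sup>L M (h i))"
    using h_int \<open>finite I\<close> by (simp add: product_integral_prod flip: h_prod)
  also have "\<dots> = (\<integral>x. f x \<partial>M) * (\<integral>x. g x \<partial>M)"
    using assms by (simp add: h_integral prod.distrib)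
  finally show "(\<integral>x. f (x j) * g (x k) \<partial>PiM I (\<lambda>_. M)) = (\<integral>x. f x \<partial>M) * (\<integral>x. g x \<partial>M)" .
qed

lemma sep_tradeoff_PiM_density_le:
  fixes L :: "'a \<Rightarrow> real"
  assumes "finite I" "prob_space M"
    and [measurable]: "L \<in> borel_measurable M" and L_nonneg: "\<And>x. 0 \<le> L x"
    and L_int: "integrable M L" "(\<integral>x. L x \<partial>M) = 1" and L_sq_int: "integrable M (\<lambda>x. (L x)\<^sup>2)"
  shows "sep (tradeoff (PiM I (\<lambda>_. M)) (PiM I (\<lambda>_. density M (\<lambda>x. ennreal (L x)))))
      \<le> sqrt ((\<integral>x. (L x)\<^sup>2 \<partial>M) ^ card I - 1)"
proof -
  have "PiM I (\<lambda>_. density M (\<lambda>x. ennreal (L x)))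
      = density (PiM I (\<lambda>_. M)) (\<lambda>x. \<Prod>i\<in>I. ennreal (L (x i)))"
    using assms by (intro PiM_density prob_space_density_integral_eq_1 prob_space_imp_sigma_finite) auto
  also have "\<dots> = density (PiM I (\<lambda>_. M)) (\<lambda>x. ennreal (\<Prod>i\<in>I. L (x i)))"
    by (simp add: prod_ennreal L_nonneg)
  finally have density_eq: "PiM I (\<lambda>_. density M (\<lambda>x. ennreal (L x)))
      = density (PiM I (\<lambda>_. M)) (\<lambda>x. ennreal (\<Prod>i\<in>I. L (x i)))" .
  have sq_eq: "(\<Prod>i\<in>I. L (x i))\<^sup>2 = (\<Prod>i\<in>I. (L (x i))\<^sup>2)" for x
    by (simp add: prod_power_distrib)
  note power = integral_PiM_prod_power[OF \<open>finite I\<close> prob_space_imp_sigma_finite[OF \<open>prob_space M\<close>]]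
  have "sep (tradeoff (PiM I (\<lambda>_. M)) (density (PiM I (\<lambda>_. M)) (\<lambda>x. ennreal (\<Prod>i\<in>I. L (x i)))))
      \<le> sqrt ((\<integral>x. (\<Prod>i\<in>I. L (x i))\<^sup>2 \<partial>PiM I (\<lambda>_. M)) - 1)"
    using power[OF L_int(1)] power[OF L_sq_int] L_int(2)
    by (intro sep_tradeoff_density_le) (auto simp: sq_eq prod_nonneg assms prob_space_PiM)
  also have "(\<integral>x. (\<Prod>i\<in>I. L (x i))\<^sup>2 \<partial>PiM I (\<lambda>_. M)) = (\<integral>x. (L x)\<^sup>2 \<partial>M) ^ card I"
    unfolding sq_eq by (rule power(2)[OF L_sq_int])
  finally show ?thesis
    unfolding density_eq .
qed

definition coord_avg :: "('a \<Rightarrow> real) \<Rightarrow> nat \<Rightarrow> (nat \<Rightarrow> 'a) \<Rightarrow> real" where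
  "coord_avg g n x = (\<Sum>j<n. g (x j)) / real n"

lemma coord_avg_nonneg: "(\<And>t. 0 \<le> g t) \<Longrightarrow> 0 \<le> coord_avg g n x"
  unfolding coord_avg_def by (simp add: sum_nonneg)

lemma coord_avg_measurable [measurable]:
  assumes [measurable]: "g \<in> borel_measurable M"
  shows "coord_avg g n \<in> borel_measurable (PiM {..<n} (\<lambda>_. M))"
  unfolding coord_avg_def by measurable

lemma PiM_density_at_coord:
  fixes g :: "'a \<Rightarrow> real"
  assumes "finite I" "J \<in> I" "prob_space M"
    and [measurable]: "g \<in> borel_measurable M" and "\<And>t. 0 \<le> g t"
    and "integrable M g" "(\<integral>t. g t \<partial>M) = 1"
  shows "PiM I (\<lambda>i. if i = J then density M (\<lambda>t. ennreal (g t)) else M)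
       = density (PiM I (\<lambda>_. M)) (\<lambda>x. ennreal (g (x J)))"
proof -
  define f where "f = (\<lambda>i t. if i = J then ennreal (g t) else 1)"
  have family_eq: "(\<lambda>i. if i = J then density M (\<lambda>t. ennreal (g t)) else M) = (\<lambda>i. density M (f i))"
    by (auto simp: f_def density_1)
  have "prob_space (density M (f i))" for i
    using assms by (cases "i = J") (simp_all add: f_def density_1 prob_space_density_integral_eq_1)
  then have "PiM I (\<lambda>i. density M (f i)) = density (PiM I (\<lambda>_. M)) (\<lambda>x. \<Prod>i\<in>I. f i (x i))"
    using assms by (intro PiM_density prob_space_imp_sigma_finite) (auto simp: f_def)
  also have "(\<lambda>x. \<Prod>i\<in>I. f i (x i)) = (\<lambda>x. ennreal (g (x J)))"
    using assms by (simp add: f_def)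
  finally show ?thesis
    unfolding family_eq .
qed

lemma emeasure_density_coord_avg:
  fixes g :: "'a \<Rightarrow> real"
  assumes [measurable]: "g \<in> borel_measurable M" "X \<in> sets (PiM {..<n} (\<lambda>_. M))"
    and g_nonneg: "\<And>t. 0 \<le> g t"
  shows "emeasure (density (PiM {..<n} (\<lambda>_. M)) (\<lambda>x. ennreal (coord_avg g n x))) X
    = (\<Sum>J<n. emeasure (density (PiM {..<n} (\<lambda>_. M)) (\<lambda>x. ennreal (g (x J)))) X) * ennreal (1 / real n)"
proof -
  have "(\<Sum>J<n. emeasure (density (PiM {..<n} (\<lambda>_. M)) (\<lambda>x. ennreal (g (x J)))) X) * ennreal (1 / real n)
      = (\<Sum>J<n. \<integral>\<^sup>+x. ennreal (g (x J)) * indicator X x \<partial>PiM {..<n} (\<lambda>_. M)) * ennreal (1 / real n)"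
    by (simp add: emeasure_density)
  also have "\<dots> = (\<integral>\<^sup>+x. (\<Sum>J<n. ennreal (g (x J)) * indicator X x) \<partial>PiM {..<n} (\<lambda>_. M))
        * ennreal (1 / real n)"
    by (subst nn_integral_sum) auto
  also have "\<dots> = (\<integral>\<^sup>+x. (\<Sum>J<n. ennreal (g (x J)) * indicator X x) * ennreal (1 / real n)
        \<partial>PiM {..<n} (\<lambda>_. M))"
    by (rule nn_integral_multc[symmetric]) measurable
  also have "\<dots> = (\<integral>\<^sup>+x. ennreal (coord_avg g n x) * indicator X x \<partial>PiM {..<n} (\<lambda>_. M))"
    by (intro nn_integral_cong)
      (simp add: coord_avg_def indicator_def g_nonneg ennreal_mult'[symmetric] sum_nonneg)
  finally show ?thesis
    by (simp add: emeasure_density)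
qed

lemma uniform_mixture_eq_density_coord_avg:
  fixes g :: "'a \<Rightarrow> real"
  assumes "0 < n" "prob_space M"
    and [measurable]: "g \<in> borel_measurable M" and g_nonneg: "\<And>t. 0 \<le> g t"
    and "integrable M g" "(\<integral>t. g t \<partial>M) = 1"
  shows "measure_pmf (pmf_of_set {..<n}) \<bind>
           (\<lambda>J. PiM {..<n} (\<lambda>i. if i = J then density M (\<lambda>t. ennreal (g t)) else M))
       = density (PiM {..<n} (\<lambda>_. M)) (\<lambda>x. ennreal (coord_avg g n x))"
    (is "?mix = ?dens")
proof -
  define N where "N J = PiM {..<n} (\<lambda>i. if i = J then density M (\<lambda>t. ennreal (g t)) else M)" for J
  have N_eq: "N J = density (PiM {..<n} (\<lambda>_. M)) (\<lambda>x. ennreal (g (x J)))" if "J < n" for J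
    unfolding N_def using assms that by (intro PiM_density_at_coord) auto
  have sets_N: "sets (N J) = sets (PiM {..<n} (\<lambda>_. M))" for J
    unfolding N_def by (rule sets_PiM_cong) auto
  have "N \<in> measurable (measure_pmf (pmf_of_set {..<n})) (subprob_algebra (PiM {..<n} (\<lambda>_. M)))"
    using sets_N assms unfolding N_def
    by (auto simp: space_subprob_algebra intro!: prob_space_imp_subprob_space prob_space_PiM
        prob_space_density_integral_eq_1)
  show ?thesis
  proof (rule measure_eqI)
    show "sets ?mix = sets ?dens"
      using sets_N by (subst sets_bind) (auto simp: N_def[symmetric])
    fix X assume "X \<in> sets ?mix"
    then have [measurable]: "X \<in> sets (PiM {..<n} (\<lambda>_. M))"
      using sets_N by (subst (asm) sets_bind) (auto simp: N_def[symmetric])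
    have "emeasure ?mix X = (\<integral>\<^sup>+J. emeasure (N J) X \<partial>measure_pmf (pmf_of_set {..<n}))"
      unfolding N_def[symmetric] using \<open>N \<in> _\<close> by (intro emeasure_bind) auto
    also have "\<dots> = (\<Sum>J<n. emeasure (N J) X) / of_nat n"
      using \<open>0 < n\<close> by (subst nn_integral_pmf_of_set) auto
    also have "\<dots> = (\<Sum>J<n. emeasure (N J) X) * ennreal (1 / real n)"
      using \<open>0 < n\<close> by (simp add: divide_ennreal_def ennreal_of_nat_eq_real_of_nat inverse_ennreal
          inverse_eq_divide)
    also have "\<dots> = emeasure ?dens X"
      using g_nonneg by (simp add: emeasure_density_coord_avg N_eq)
    finally show "emeasure ?mix X = emeasure ?dens X" .
  qed
qed

lemma sum_lessThan_if_eq: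
  fixes a b :: "'a::comm_ring_1"
  assumes "j < n"
  shows "(\<Sum>k<n. if j = k then a else b) = a + (of_nat n - 1) * b"
proof -
  have "(\<Sum>k<n. if j = k then a else b) = (\<Sum>k<n. b + (if j = k then a - b else 0))"
    by (intro sum.cong) auto
  also have "\<dots> = a + (of_nat n - 1) * b"
    using assms by (simp add: sum.distrib algebra_simps)
  finally show ?thesis .
qed

lemma integral_coord_avg:
  fixes g :: "'a \<Rightarrow> real"
  assumes "0 < n" "prob_space M" "integrable M g"
  shows "integrable (PiM {..<n} (\<lambda>_. M)) (coord_avg g n)"
    "(\<integral>x. coord_avg g n x \<partial>PiM {..<n} (\<lambda>_. M)) = (\<integral>t. g t \<partial>M)"
proof -
  have coord: "integrable (PiM {..<n} (\<lambda>_. M)) (\<lambda>x. g (x j))"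
      "(\<integral>x. g (x j) \<partial>PiM {..<n} (\<lambda>_. M)) = (\<integral>t. g t \<partial>M)" if "j < n" for j
    using integral_PiM_coord[of "{..<n}" j M g] assms that by auto
  show "integrable (PiM {..<n} (\<lambda>_. M)) (coord_avg g n)"
    unfolding coord_avg_def[abs_def] using coord(1)
    by (intro integrable_divide Bochner_Integration.integrable_sum) auto
  show "(\<integral>x. coord_avg g n x \<partial>PiM {..<n} (\<lambda>_. M)) = (\<integral>t. g t \<partial>M)"
    unfolding coord_avg_def using coord \<open>0 < n\<close> by (simp add: integral_sum)
qed

lemma integral_coord_avg_sq:
  fixes g :: "'a \<Rightarrow> real"
  assumes "0 < n" "prob_space M" "integrable M g" "integrable M (\<lambda>t. (g t)\<^sup>2)"
  shows "integrable (PiM {..<n} (\<lambda>_. M)) (\<lambda>x. (coord_avg g n x)\<^sup>2)"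
    "(\<integral>x. (coord_avg g n x)\<^sup>2 \<partial>PiM {..<n} (\<lambda>_. M))
       = ((\<integral>t. (g t)\<^sup>2 \<partial>M) + (real n - 1) * (\<integral>t. g t \<partial>M)\<^sup>2) / real n"
proof -
  define P where "P = PiM {..<n} (\<lambda>_. M)"
  define m2 where "m2 = (\<integral>t. (g t)\<^sup>2 \<partial>M)"
  define m1 where "m1 = (\<integral>t. g t \<partial>M)"
  have pair: "integrable P (\<lambda>x. g (x j) * g (x k))
      \<and> (\<integral>x. g (x j) * g (x k) \<partial>P) = (if j = k then m2 else m1\<^sup>2)" if "j < n" "k < n" for j k
    using integral_PiM_coord[of "{..<n}" j M "\<lambda>t. (g t)\<^sup>2"]
      integral_PiM_two_coords[of "{..<n}" j k M g g] assms that
    by (cases "j = k") (simp_all add: P_def m1_def m2_def power2_eq_square)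
  have sq_eq: "(\<lambda>x. (coord_avg g n x)\<^sup>2) = (\<lambda>x. (\<Sum>j<n. \<Sum>k<n. g (x j) * g (x k)) / (real n)\<^sup>2)"
    by (simp add: coord_avg_def power_divide power2_eq_square sum_product)
  show "integrable (PiM {..<n} (\<lambda>_. M)) (\<lambda>x. (coord_avg g n x)\<^sup>2)"
    unfolding sq_eq P_def[symmetric] using pair
    by (intro integrable_divide Bochner_Integration.integrable_sum) auto
  have "(\<integral>x. (\<Sum>j<n. \<Sum>k<n. g (x j) * g (x k)) \<partial>P) = (\<Sum>j<n. \<integral>x. (\<Sum>k<n. g (x j) * g (x k)) \<partial>P)"
    using pair by (intro Bochner_Integration.integral_sum Bochner_Integration.integrable_sum) auto
  also have "\<dots> = (\<Sum>j<n. \<Sum>k<n. \<integral>x. g (x j) * g (x k) \<partial>P)"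
    using pair by (intro sum.cong refl Bochner_Integration.integral_sum) auto
  also have "\<dots> = (\<Sum>j<n. \<Sum>k<n. if j = k then m2 else m1\<^sup>2)"
    using pair by (intro sum.cong refl) auto
  finally have "(\<integral>x. (coord_avg g n x)\<^sup>2 \<partial>P) = (\<Sum>j<n. \<Sum>k<n. if j = k then m2 else m1\<^sup>2) / (real n)\<^sup>2"
    unfolding sq_eq by simp
  also have "(\<Sum>j<n. \<Sum>k<n. if j = k then m2 else m1\<^sup>2) = real n * (m2 + (real n - 1) * m1\<^sup>2)"
    by (simp add: sum_lessThan_if_eq)
  finally show "(\<integral>x. (coord_avg g n x)\<^sup>2 \<partial>PiM {..<n} (\<lambda>_. M))
       = ((\<integral>t. (g t)\<^sup>2 \<partial>M) + (real n - 1) * (\<integral>t. g t \<partial>M)\<^sup>2) / real n"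
    using \<open>0 < n\<close> by (simp add: P_def m1_def m2_def power2_eq_square)
qed

lemma prob_space_gauss1: "prob_space (gauss1 m)"
  unfolding gauss1_def by (rule prob_space_normal_density) simp

lemma sets_gauss1 [simp, measurable_cong]: "sets (gauss1 m) = sets borel"
  unfolding gauss1_def by simp

lemma space_gauss1 [simp]: "space (gauss1 m) = UNIV"
  unfolding gauss1_def by simp

definition gauss_ratio :: "real \<Rightarrow> real \<Rightarrow> real" where
  "gauss_ratio a t = exp (a * t - a\<^sup>2 / 2)"

lemma gauss_ratio_pos: "0 < gauss_ratio a t"
  unfolding gauss_ratio_def by simp

lemma gauss_ratio_measurable [measurable]: "gauss_ratio a \<in> borel_measurable borel"
  unfolding gauss_ratio_def by measurable

lemma gauss_ratio_sq: "(gauss_ratio a t)\<^sup>2 = exp (a\<^sup>2) * gauss_ratio (2 * a) t"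
  unfolding gauss_ratio_def power2_eq_square mult_exp_exp
  by (simp add: algebra_simps power2_eq_square)

lemma gauss1_eq_density: "gauss1 a = density (gauss1 0) (\<lambda>t. ennreal (gauss_ratio a t))"
proof -
  have "normal_density 0 1 t * gauss_ratio a t = normal_density a 1 t" for t
    unfolding normal_density_def gauss_ratio_def
    by (simp add: mult_exp_exp power2_diff field_simps)
  then have "density (gauss1 0) (\<lambda>t. ennreal (gauss_ratio a t)) =
        density lborel (\<lambda>t. ennreal (normal_density a 1 t))"
    unfolding gauss1_def
    by (subst density_density_eq) (auto simp: ennreal_mult'[symmetric])
  then show ?thesis
    unfolding gauss1_def by simp
qed

lemma integral_gauss_ratio:
  "integrable (gauss1 0) (gauss_ratio a)" "(\<integral>t. gauss_ratio a t \<partial>gauss1 0) = 1"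
proof -
  interpret prob_space "gauss1 a" by (rule prob_space_gauss1)
  have "integrable (density (gauss1 0) (\<lambda>t. ennreal (gauss_ratio a t))) (\<lambda>_. 1::real)"
    unfolding gauss1_eq_density[symmetric] by simp
  then show "integrable (gauss1 0) (gauss_ratio a)"
    by (subst (asm) integrable_density) (auto simp: gauss_ratio_pos less_imp_le)
  have "(\<integral>t. 1 \<partial>density (gauss1 0) (\<lambda>t. ennreal (gauss_ratio a t))) = (1::real)"
    unfolding gauss1_eq_density[symmetric] using prob_space[unfolded space_gauss1] by simp
  then show "(\<integral>t. gauss_ratio a t \<partial>gauss1 0) = 1"
    by (subst (asm) integral_density) (auto simp: gauss_ratio_pos less_imp_le)
qed

lemma integral_gauss_ratio_sq:
  "integrable (gauss1 0) (\<lambda>t. (gauss_ratio a t)\<^sup>2)"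
  "(\<integral>t. (gauss_ratio a t)\<^sup>2 \<partial>gauss1 0) = exp (a\<^sup>2)"
  unfolding gauss_ratio_sq using integral_gauss_ratio[of "2 * a"] by simp_all

lemma dpsgd_P1_eq_density:
  assumes "0 < M"
  shows "dpsgd_P1 \<sigma> M = density (dpsgd_P0 M) (\<lambda>x. ennreal (coord_avg (gauss_ratio (1 / \<sigma>)) M x))"
  unfolding dpsgd_P1_def dpsgd_P0_def gauss1_eq_density[of "1 / \<sigma>"]
  using assms integral_gauss_ratio
  by (intro uniform_mixture_eq_density_coord_avg) (auto simp: prob_space_gauss1 gauss_ratio_pos less_imp_le)

lemma sep_dpsgd_tradeoff_comp_le:
  assumes "0 < M"
  shows "sep (dpsgd_tradeoff_comp \<sigma> M E) \<le> sqrt ((1 + (exp (1 / \<sigma>\<^sup>2) - 1) / real M) ^ E - 1)"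
proof -
  define L where "L = coord_avg (gauss_ratio (1 / \<sigma>)) M"
  have prob_P0: "prob_space (dpsgd_P0 M)"
    unfolding dpsgd_P0_def by (intro prob_space_PiM prob_space_gauss1)
  note avg = integral_coord_avg[OF assms prob_space_gauss1 integral_gauss_ratio(1)]
  note avg_sq = integral_coord_avg_sq[OF assms prob_space_gauss1 integral_gauss_ratio(1)
      integral_gauss_ratio_sq(1)]
  have "(\<integral>x. (L x)\<^sup>2 \<partial>dpsgd_P0 M) = 1 + (exp (1 / \<sigma>\<^sup>2) - 1) / real M"
    using assms unfolding L_def dpsgd_P0_def avg_sq(2)
    by (simp add: integral_gauss_ratio integral_gauss_ratio_sq field_simps)
  moreover have "sep (dpsgd_tradeoff_comp \<sigma> M E) \<le> sqrt ((\<integral>x. (L x)\<^sup>2 \<partial>dpsgd_P0 M) ^ E - 1)"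
    unfolding dpsgd_tradeoff_comp_def dpsgd_P1_eq_density[OF assms] L_def[symmetric]
    using sep_tradeoff_PiM_density_le[of "{..<E}" "dpsgd_P0 M" L] prob_P0 avg avg_sq
    by (auto simp: L_def dpsgd_P0_def integral_gauss_ratio coord_avg_nonneg gauss_ratio_pos less_imp_le)
  ultimately show ?thesis
    by simp
qed

lemma one_plus_power_minus_one_le:
  fixes x :: real
  assumes "0 \<le> x"
  shows "(1 + x) ^ n - 1 \<le> n * x * exp (n * x)"
proof -
  have "(1 + x) ^ n \<le> exp x ^ n"
    using assms by (intro power_mono) auto
  also have "\<dots> = exp (n * x)"
    by (simp add: exp_of_nat_mult)
  finally have "(1 + x) ^ n \<le> exp (n * x)" .
  moreover have "exp (n * x) - 1 \<le> n * x * exp (n * x)"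
    using exp_ge_add_one_self[of "- (n * x)"] by (simp add: exp_minus field_simps)
  ultimately show ?thesis
    by linarith
qed

lemma one_plus_div_power_minus_one_le:
  fixes c B m :: real
  assumes "0 \<le> c" "1 < m" "real n \<le> B * m"
  shows "(1 + c / m) ^ n - 1 \<le> exp (c * B) * (c / (m - 1)) * n"
proof -
  have "(1 + c / m) ^ n - 1 \<le> n * (c / m) * exp (n * (c / m))"
    using assms by (intro one_plus_power_minus_one_le) simp
  also have "\<dots> \<le> c / (m - 1) * n * exp (c * B)"
  proof (rule mult_mono)
    show "n * (c / m) \<le> c / (m - 1) * n"
      using assms by (simp add: divide_left_mono mult.commute)
    show "exp (n * (c / m)) \<le> exp (c * B)"
      using assms mult_left_mono[of "real n" "B * m" c] by (simp add: field_simps)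
  qed (use assms in auto)
  finally show ?thesis
    by (simp only: mult_ac)
qed

lemma sep_dpsgd_tradeoff_comp_le_linear:
  assumes "2 \<le> M" "real E \<le> B * real M"
  shows "sep (dpsgd_tradeoff_comp \<sigma> M E) \<le> sqrt (exp ((exp (1 / \<sigma>\<^sup>2) - 1) * B))
           * sqrt ((exp (1 / \<sigma>\<^sup>2) - 1) / (real M - 1)) * sqrt (real E)"
proof -
  define c where "c = exp (1 / \<sigma>\<^sup>2) - 1"
  have "sep (dpsgd_tradeoff_comp \<sigma> M E) \<le> sqrt ((1 + c / M) ^ E - 1)"
    using sep_dpsgd_tradeoff_comp_le[of M \<sigma> E] assms unfolding c_def by simp
  also have "\<dots> \<le> sqrt (exp (c * B) * (c / (real M - 1)) * E)"
    using assms by (intro real_sqrt_le_mono one_plus_div_power_minus_one_le) (auto simp: c_def)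
  also have "\<dots> = sqrt (exp (c * B)) * sqrt (c / (real M - 1)) * sqrt E"
    by (simp only: real_sqrt_mult)
  finally show ?thesis
    unfolding c_def .
qed

theorem mainTheorem4:
  fixes \<sigma> :: real and E :: "nat \<Rightarrow> nat"
  assumes "\<sigma> > 0"
    and "\<forall>M\<ge>2. E M > 0"
    and "(\<lambda>M. real (E M)) \<in> O(\<lambda>M. real M)"
  shows "\<exists>C. \<forall>\<^sub>F M in sequentially.
           sep (dpsgd_tradeoff_comp \<sigma> M (E M))
             \<le> C * sqrt ((exp (1 / \<sigma>\<^sup>2) - 1) / (real M - 1)) * sqrt (real (E M))"
proof -
  from assms(3) obtain B where "\<forall>\<^sub>F M in sequentially. real (E M) \<le> B * real M"
    by (elim landau_o.bigE) auto
  then have "\<forall>\<^sub>F M in sequentially. sep (dpsgd_tradeoff_comp \<sigma> M (E M))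
      \<le> sqrt (exp ((exp (1 / \<sigma>\<^sup>2) - 1) * B)) * sqrt ((exp (1 / \<sigma>\<^sup>2) - 1) / (real M - 1))
         * sqrt (real (E M))"
    using eventually_ge_at_top[of "2::nat"]
    by eventually_elim (rule sep_dpsgd_tradeoff_comp_le_linear)
  then show ?thesis
    by blast
qed

end
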